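(* Let $W$ be a group admitting an odd connected Coxeter system $(W,S)$ of rank $n\geq 3$ whose graph $\mathcal V_{(W,S)}$ is a tree. Then the restriction map $\operatorname{Aut}(W)\to\operatorname{Aut}(W')$, $\phi\mapsto\phi|_{W'}$, is injective, where $W'$ is the commutator subgroup of $W$.
   Context: A Coxeter system $(W,S)$ with $S=\{w_1,\dots,w_n\}$ means that $W$ has the presentation $\langle w_1,\dots,w_n \mid (w_iw_j)^{m_{ij}}=1\rangle$, where $m_{ii}=1$ and $m_{ij}=m_{ji}\in\{2,3,4,\dots\}\cup\{\infty\}$ for $i\neq j$ (no relation is imposed when $m_{ij}=\infty$). The numbers $m_{ij}$, $i\neq j$, are the exponents and $n$ is the rank. The system is odd if every exponent is odd or $\infty$. The graph $\mathcal V_{(W,S)}$ has vertex set $\{1,\dots,n\}$ and an edge between $i\neq j$ iff $m_{ij}<\infty$; the system is connected if $\mathcal V_{(W,S)}$ is connected. The commutator subgroup $W'$ is characteristic, so each automorphism of $W$ restricts to an automorphism of $W'$. *)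

theory Defs
  imports "HOL-Algebra.Algebra" "HOL-Library.Extended_Nat"
begin

text \<open>Words in abstract generators: a letter (i, b) stands for the generator x_i if b = False
  and for its inverse if b = True.\<close>

type_synonym word = "(nat \<times> bool) list"

definition inv_letter :: "nat \<times> bool \<Rightarrow> nat \<times> bool" where
  "inv_letter l = (fst l, \<not> snd l)"

fun eval_word :: "('g, 'b) monoid_scheme \<Rightarrow> (nat \<Rightarrow> 'g) \<Rightarrow> word \<Rightarrow> 'g" where
  "eval_word G x [] = \<one>\<^bsub>G\<^esub>"
| "eval_word G x ((i, b) # w) =
     (if b then inv\<^bsub>G\<^esub> (x i) else x i) \<otimes>\<^bsub>G\<^esub> eval_word G x w"

text \<open>Equality in the group presented by generators x_0..x_{n-1} and relators R:
  the congruence on words generated by free cancellation and insertion of relators.\<close>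
inductive pres_eq :: "nat \<Rightarrow> word set \<Rightarrow> word \<Rightarrow> word \<Rightarrow> bool" for n R where
  refl: "pres_eq n R w w"
| sym: "pres_eq n R u v \<Longrightarrow> pres_eq n R v u"
| trans: "pres_eq n R u v \<Longrightarrow> pres_eq n R v w \<Longrightarrow> pres_eq n R u w"
| cancel: "fst l < n \<Longrightarrow> pres_eq n R (u @ v) (u @ [l, inv_letter l] @ v)"
| relator: "r \<in> R \<Longrightarrow> pres_eq n R (u @ v) (u @ r @ v)"

definition word_over :: "nat \<Rightarrow> word \<Rightarrow> bool" where
  "word_over n w \<longleftrightarrow> (\<forall>l \<in> set w. fst l < n)"

definition has_presentation ::
    "('g, 'b) monoid_scheme \<Rightarrow> nat \<Rightarrow> (nat \<Rightarrow> 'g) \<Rightarrow> word set \<Rightarrow> bool" where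
  "has_presentation G n x R \<longleftrightarrow>
     group G \<and> (\<forall>i < n. x i \<in> carrier G) \<and>
     generate G (x ` {..<n}) = carrier G \<and>
     (\<forall>w. word_over n w \<longrightarrow> (eval_word G x w = \<one>\<^bsub>G\<^esub> \<longleftrightarrow> pres_eq n R w []))"

definition coxeter_matrix :: "nat \<Rightarrow> (nat \<Rightarrow> nat \<Rightarrow> enat) \<Rightarrow> bool" where
  "coxeter_matrix n m \<longleftrightarrow>
     (\<forall>i < n. m i i = 1) \<and>
     (\<forall>i < n. \<forall>j < n. m i j = m j i) \<and>
     (\<forall>i < n. \<forall>j < n. i \<noteq> j \<longrightarrow> m i j \<ge> 2)"

definition coxeter_relators :: "nat \<Rightarrow> (nat \<Rightarrow> nat \<Rightarrow> enat) \<Rightarrow> word set" where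
  "coxeter_relators n m =
     {concat (replicate k [(i, False), (j, False)]) | i j k.
        i < n \<and> j < n \<and> m i j = enat k}"

definition coxeter_system ::
    "('g, 'b) monoid_scheme \<Rightarrow> nat \<Rightarrow> (nat \<Rightarrow> 'g) \<Rightarrow> (nat \<Rightarrow> nat \<Rightarrow> enat) \<Rightarrow> bool" where
  "coxeter_system W n w m \<longleftrightarrow>
     coxeter_matrix n m \<and> has_presentation W n w (coxeter_relators n m)"

definition odd_coxeter :: "nat \<Rightarrow> (nat \<Rightarrow> nat \<Rightarrow> enat) \<Rightarrow> bool" where
  "odd_coxeter n m \<longleftrightarrow>
     (\<forall>i < n. \<forall>j < n. i \<noteq> j \<longrightarrow> m i j = \<infinity> \<or> (\<exists>k. m i j = enat k \<and> odd k))"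

definition cox_adj :: "nat \<Rightarrow> (nat \<Rightarrow> nat \<Rightarrow> enat) \<Rightarrow> nat \<Rightarrow> nat \<Rightarrow> bool" where
  "cox_adj n m i j \<longleftrightarrow> i < n \<and> j < n \<and> i \<noteq> j \<and> m i j < \<infinity>"

definition graph_connected :: "nat \<Rightarrow> (nat \<Rightarrow> nat \<Rightarrow> bool) \<Rightarrow> bool" where
  "graph_connected n E \<longleftrightarrow> (\<forall>i < n. \<forall>j < n. (i, j) \<in> {(a, b). E a b}\<^sup>*)"

definition graph_has_cycle :: "nat \<Rightarrow> (nat \<Rightarrow> nat \<Rightarrow> bool) \<Rightarrow> bool" where
  "graph_has_cycle n E \<longleftrightarrow>
     (\<exists>vs. length vs \<ge> 3 \<and> distinct vs \<and> set vs \<subseteq> {..<n} \<and>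
        (\<forall>k < length vs - 1. E (vs ! k) (vs ! Suc k)) \<and> E (last vs) (hd vs))"

definition graph_is_tree :: "nat \<Rightarrow> (nat \<Rightarrow> nat \<Rightarrow> bool) \<Rightarrow> bool" where
  "graph_is_tree n E \<longleftrightarrow> graph_connected n E \<and> \<not> graph_has_cycle n E"

end

theory Submission
  imports Defs
begin

text \<open>Root the tree at vertex 0 and put x_e = w_{p(e)} w_e for every other vertex e with
  parent p(e); the order of x_e is m_{p(e) e}. The generators act on pairs (q, b), where q is a
  reduced word in the free product of the cyclic groups generated by the x_e and b is a bit, and
  this action respects the Coxeter relations. Hence every element of W is w_0^b times the product
  of such a reduced word, and the action of an element on the pair ([], False) recovers that
  word. Since the exponents are odd, x_e is a power of its square, which is a commutator; so the
  elements with b = False form W', and the others form w_0 W'. A reduced word commuting with both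
  x_1 and x_2 is empty, so W' has trivial centre. If two automorphisms agree on W', they preserve
  W' and its complement, so \<psi>(g)\<inverse> \<phi>(g) lies in W' and centralises it, hence is trivial.\<close>

section \<open>Free products of cyclic groups\<close>

text \<open>A list [(e_1, k_1), ..., (e_r, k_r)] stands for the product a_{e_1}^{k_1} ... a_{e_r}^{k_r} in
  the free product of cyclic groups generated by elements a_e of order ord e. The reduced lists are
  the normal forms, and lmult1 e k q is the normal form of a_e^k q.\<close>

locale cyclic_free_product =
  fixes ord :: "nat \<Rightarrow> nat"
  assumes ord_pos: "0 < ord e"
begin

definition reduced :: "(nat \<times> nat) list \<Rightarrow> bool" where
  "reduced q \<longleftrightarrow> (\<forall>(e, k) \<in> set q. 0 < k \<and> k < ord e) \<and> distinct_adj (map fst q)"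

definition cons_power :: "nat \<Rightarrow> nat \<Rightarrow> (nat \<times> nat) list \<Rightarrow> (nat \<times> nat) list" where
  "cons_power e k q = (if k mod ord e = 0 then q else (e, k mod ord e) # q)"

fun lmult1 :: "nat \<Rightarrow> nat \<Rightarrow> (nat \<times> nat) list \<Rightarrow> (nat \<times> nat) list" where
  "lmult1 e k ((e', x) # r) =
     (if e' = e then cons_power e (k + x) r else cons_power e k ((e', x) # r))"
| "lmult1 e k [] = cons_power e k []"

definition lmult :: "(nat \<times> nat) list \<Rightarrow> (nat \<times> nat) list \<Rightarrow> (nat \<times> nat) list" where
  "lmult f q = foldr (\<lambda>(e, k). lmult1 e k) f q"

lemma reduced_Nil [simp]: "reduced []"
  by (simp add: reduced_def)

lemma reduced_Cons:
  "reduced ((e, k) # q) \<longleftrightarrow> 0 < k \<and> k < ord e \<and> reduced q \<and> (q = [] \<or> fst (hd q) \<noteq> e)"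
  by (cases q) (auto simp: reduced_def distinct_adj_Cons)

lemma reduced_append:
  "reduced (f @ q) \<longleftrightarrow> reduced f \<and> reduced q \<and> (f = [] \<or> q = [] \<or> fst (last f) \<noteq> fst (hd q))"
  by (auto simp: reduced_def distinct_adj_append_iff last_map hd_map)

lemma reduced_ConsD: "reduced (a # q) \<Longrightarrow> reduced q"
  by (cases a) (simp add: reduced_Cons)

lemma reduced_cons_power: "reduced q \<Longrightarrow> (q = [] \<or> fst (hd q) \<noteq> e) \<Longrightarrow> reduced (cons_power e k q)"
  using ord_pos[of e] by (auto simp: cons_power_def reduced_Cons)

lemma reduced_lmult1: "reduced q \<Longrightarrow> reduced (lmult1 e k q)"
  by (induction e k q rule: lmult1.induct) (auto simp: reduced_Cons intro!: reduced_cons_power)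

lemma lmult1_Cons_reduced: "reduced ((e, k) # q) \<Longrightarrow> lmult1 e k q = (e, k) # q"
  by (cases q) (auto simp: reduced_Cons cons_power_def)

lemma cons_power_cong: "k mod ord e = k' mod ord e \<Longrightarrow> cons_power e k q = cons_power e k' q"
  by (simp add: cons_power_def)

lemma lmult1_mod: "lmult1 e (k mod ord e) q = lmult1 e k q"
  by (cases q) (auto intro!: cons_power_cong simp: mod_add_left_eq)

lemma lmult1_other: "q = [] \<or> fst (hd q) \<noteq> e \<Longrightarrow> lmult1 e k q = cons_power e k q"
  by (cases q) auto

lemma lmult1_cons_power:
  assumes "q = [] \<or> fst (hd q) \<noteq> e"
  shows "lmult1 e j (cons_power e k q) = cons_power e (j + k) q"
proof (cases "k mod ord e = 0")
  case True
  then have "(j + k) mod ord e = j mod ord e" by (metis add.right_neutral mod_add_right_eq)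
  then show ?thesis using True assms by (simp add: cons_power_def lmult1_other)
next
  case False
  then show ?thesis by (simp add: cons_power_def mod_add_right_eq)
qed

lemma lmult1_add: "reduced q \<Longrightarrow> lmult1 e j (lmult1 e k q) = lmult1 e (j + k) q"
proof (cases q)
  case (Cons a r)
  obtain e' x where a: "a = (e', x)" by (cases a)
  assume "reduced q"
  then have "r = [] \<or> fst (hd r) \<noteq> e'" using Cons a by (simp add: reduced_Cons)
  then show ?thesis
    using Cons a lmult1_cons_power[of q e] by (auto simp: lmult1_cons_power add.assoc)
qed (simp add: lmult1_cons_power)

lemma lmult1_zero:
  assumes "reduced q" and "k mod ord e = 0"
  shows "lmult1 e k q = q"
proof (cases "q \<noteq> [] \<and> fst (hd q) = e")
  case True
  then obtain x r where q: "q = (e, x) # r" by (cases q) auto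
  have "(k + x) mod ord e = x"
    using assms q by (simp add: reduced_Cons mod_add_left_eq[symmetric])
  then show ?thesis using assms q by (simp add: reduced_Cons cons_power_def)
next
  case False
  then show ?thesis using assms by (simp add: lmult1_other cons_power_def)
qed

lemma lmult_Nil [simp]: "lmult [] q = q"
  by (simp add: lmult_def)

lemma lmult_Cons [simp]: "lmult ((e, k) # f) q = lmult1 e k (lmult f q)"
  by (simp add: lmult_def)

lemma lmult_append: "lmult (f @ g) q = lmult f (lmult g q)"
  by (simp add: lmult_def)

lemma reduced_lmult: "reduced q \<Longrightarrow> reduced (lmult f q)"
  by (induction f) (auto intro: reduced_lmult1)

lemma lmult_reduced_append: "reduced (f @ q) \<Longrightarrow> lmult f q = f @ q"
proof (induction f)
  case (Cons a f)
  then show ?case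
    by (cases a) (auto simp: reduced_ConsD lmult1_Cons_reduced)
qed simp

lemma lmult_cons_power:
  "reduced q \<Longrightarrow> lmult (cons_power e k f) q = lmult1 e k (lmult f q)"
  by (auto simp: cons_power_def lmult1_mod lmult1_zero reduced_lmult)

lemma lmult_lmult1: "reduced q \<Longrightarrow> lmult (lmult1 e k f) q = lmult1 e k (lmult f q)"
proof (induction e k f rule: lmult1.induct)
  case (1 e k e' x r)
  then show ?case
    by (auto simp: lmult_cons_power lmult1_add reduced_lmult)
qed (simp add: lmult_cons_power)

lemma lmult_assoc: "reduced q \<Longrightarrow> lmult g (lmult f q) = lmult (lmult g f) q"
  by (induction g) (auto simp: lmult_lmult1)

lemma lmult1_inverse_left: "reduced q \<Longrightarrow> lmult1 e (ord e - 1) (lmult1 e 1 q) = q"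
  by (simp add: lmult1_add lmult1_zero ord_pos)

lemma lmult1_inverse_right: "reduced q \<Longrightarrow> lmult1 e 1 (lmult1 e (ord e - 1) q) = q"
  by (simp add: lmult1_add lmult1_zero ord_pos)

lemma reduced_commuting_generator_hd:
  assumes f: "reduced f" and i: "1 < ord i" and comm: "lmult f [(i, 1)] = lmult1 i 1 f"
  shows "f = [] \<or> fst (hd f) = i"
proof (rule ccontr)
  assume "\<not> (f = [] \<or> fst (hd f) = i)"
  then have "f \<noteq> []" and hd: "fst (hd f) \<noteq> i" by auto
  then have right: "lmult f [(i, 1)] = (i, 1) # f"
    using comm i by (simp add: lmult1_other cons_power_def)
  show False
  proof (cases "fst (last f) = i")
    case False
    then have "reduced (f @ [(i, 1)])" using f i by (simp add: reduced_append reduced_Cons)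
    then have "f @ [(i, 1)] = (i, 1) # f" using right lmult_reduced_append by simp
    then show False using hd \<open>f \<noteq> []\<close> by (cases f) auto
  next
    case True
    then obtain f0 x where f0: "f = f0 @ [(i, x)]"
      using \<open>f \<noteq> []\<close> by (metis append_butlast_last_id prod.collapse)
    have "reduced (f0 @ cons_power i (x + 1) [])"
      using f i f0 ord_pos[of i] by (auto simp: reduced_append reduced_Cons cons_power_def)
    then have "lmult f [(i, 1)] = f0 @ cons_power i (x + 1) []"
      using i f0 by (simp add: lmult_append lmult_reduced_append cons_power_def)
    then have "length (lmult f [(i, 1)]) \<le> length f"
      using f0 by (simp add: cons_power_def)
    then show False using right by simp
  qed
qed

definition gen_word :: "nat list \<Rightarrow> (nat \<times> nat) list" where
  "gen_word es = map (\<lambda>e. (e, 1)) es"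

definition inv_gen_word :: "nat list \<Rightarrow> (nat \<times> nat) list" where
  "inv_gen_word es = rev (map (\<lambda>e. (e, ord e - 1)) es)"

lemma gen_word_append: "gen_word (es @ fs) = gen_word es @ gen_word fs"
  by (simp add: gen_word_def)

lemma inv_gen_word_append: "inv_gen_word (es @ fs) = inv_gen_word fs @ inv_gen_word es"
  by (simp add: inv_gen_word_def)

lemma lmult_inv_gen_word_cancel:
  "reduced q \<Longrightarrow> lmult (inv_gen_word es) (lmult (gen_word es) q) = q"
proof (induction es)
  case (Cons e es)
  have "lmult1 e (ord e - 1) (lmult1 e 1 (lmult (gen_word es) q)) = lmult (gen_word es) q"
    using Cons.prems by (intro lmult1_inverse_left reduced_lmult)
  then show ?case
    using Cons by (simp add: gen_word_def inv_gen_word_def lmult_append)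
qed (simp add: gen_word_def inv_gen_word_def)

lemma lmult_gen_word_cancel:
  "reduced q \<Longrightarrow> lmult (gen_word es) (lmult (inv_gen_word es) q) = q"
proof (induction es arbitrary: q)
  case (Cons e es)
  have "lmult1 e 1 (lmult1 e (ord e - 1) q) = q"
    using Cons.prems by (rule lmult1_inverse_right)
  then show ?case
    using Cons reduced_lmult1 by (simp add: gen_word_def inv_gen_word_def lmult_append)
qed (simp add: gen_word_def inv_gen_word_def)

end

section \<open>Rooted trees\<close>

lemma successively_map_upt:
  "successively P (map f [0..<k]) \<longleftrightarrow> (\<forall>t. Suc t < k \<longrightarrow> P (f t) (f (Suc t)))"
  by (auto simp: successively_conv_nth)

locale rooted_tree =
  fixes n :: nat and E :: "nat \<Rightarrow> nat \<Rightarrow> bool"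
  assumes edge_sym: "E a b \<Longrightarrow> E b a"
    and edge_bounds: "E a b \<Longrightarrow> a < n \<and> b < n \<and> a \<noteq> b"
    and connected: "graph_connected n E"
    and acyclic: "\<not> graph_has_cycle n E"
    and root_vertex: "0 < n"
begin

definition depth :: "nat \<Rightarrow> nat" where
  "depth i = (LEAST k. (0, i) \<in> {(a, b). E a b} ^^ k)"

definition parent :: "nat \<Rightarrow> nat" where
  "parent i = (SOME j. E j i \<and> Suc (depth j) = depth i)"

definition ancestor :: "nat \<Rightarrow> nat \<Rightarrow> nat" where
  "ancestor t i = (parent ^^ t) i"

lemma graph_has_cycleI:
  assumes "3 \<le> length vs" "distinct vs" "set vs \<subseteq> {..<n}" "successively E vs" "E (last vs) (hd vs)"
  shows "graph_has_cycle n E"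
  unfolding graph_has_cycle_def
  using assms by (auto simp: successively_conv_nth intro!: exI[of _ vs])

lemma walk_of_depth: "i < n \<Longrightarrow> (0, i) \<in> {(a, b). E a b} ^^ depth i"
proof -
  assume "i < n"
  then have "(0, i) \<in> {(a, b). E a b}\<^sup>*"
    using connected root_vertex unfolding graph_connected_def by auto
  then obtain k where "(0, i) \<in> {(a, b). E a b} ^^ k" using rtrancl_power by blast
  then show ?thesis unfolding depth_def by (rule LeastI)
qed

lemma depth_le: "(0, i) \<in> {(a, b). E a b} ^^ k \<Longrightarrow> depth i \<le> k"
  unfolding depth_def by (rule Least_le)

lemma depth_root [simp]: "depth 0 = 0"
  using depth_le[of 0 0] by simp

lemma depth_eq_0_iff: "i < n \<Longrightarrow> depth i = 0 \<longleftrightarrow> i = 0"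
  using walk_of_depth[of i] by auto

lemma depth_edge: "E a b \<Longrightarrow> depth b \<le> Suc (depth a)"
proof -
  assume ab: "E a b"
  then have "(0, a) \<in> {(a, b). E a b} ^^ depth a" using walk_of_depth edge_bounds by blast
  then have "(0, b) \<in> {(a, b). E a b} ^^ Suc (depth a)" using ab by auto
  then show ?thesis by (rule depth_le)
qed

lemma parent: assumes "i < n" "i \<noteq> 0"
  shows "E (parent i) i" and "Suc (depth (parent i)) = depth i"
proof -
  obtain k where k: "depth i = Suc k" using assms depth_eq_0_iff by (cases "depth i") auto
  then have "(0, i) \<in> {(a, b). E a b} ^^ Suc k" using walk_of_depth assms by metis
  then obtain j where j: "(0, j) \<in> {(a, b). E a b} ^^ k" "E j i" by auto
  have "depth j \<le> k" using j depth_le by blast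
  moreover have "depth i \<le> Suc (depth j)" using depth_edge j by blast
  ultimately have "E j i \<and> Suc (depth j) = depth i" using j k by auto
  then have "E (parent i) i \<and> Suc (depth (parent i)) = depth i"
    unfolding parent_def by (rule someI)
  then show "E (parent i) i" and "Suc (depth (parent i)) = depth i" by auto
qed

lemma parent_less: "i < n \<Longrightarrow> i \<noteq> 0 \<Longrightarrow> parent i < n"
  using parent(1) edge_bounds by blast

lemma ancestor_0 [simp]: "ancestor 0 i = i"
  by (simp add: ancestor_def)

lemma ancestor_Suc: "ancestor (Suc t) i = parent (ancestor t i)"
  by (simp add: ancestor_def)

lemma ancestor_Suc': "ancestor (Suc t) i = ancestor t (parent i)"
  by (simp add: ancestor_def funpow_Suc_right del: funpow.simps)

lemma ancestor_less_depth:
  "i < n \<Longrightarrow> t \<le> depth i \<Longrightarrow> ancestor t i < n \<and> depth (ancestor t i) = depth i - t"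
proof (induction t)
  case (Suc t)
  then have IH: "ancestor t i < n" "depth (ancestor t i) = depth i - t" by auto
  with Suc.prems have "ancestor t i \<noteq> 0" by (metis depth_root diff_is_0_eq not_less_eq_eq)
  then show ?case using parent[OF IH(1)] parent_less[OF IH(1)] IH by (auto simp: ancestor_Suc)
qed simp

lemma ancestor_less: "i < n \<Longrightarrow> t \<le> depth i \<Longrightarrow> ancestor t i < n"
  using ancestor_less_depth by blast

lemma depth_ancestor: "i < n \<Longrightarrow> t \<le> depth i \<Longrightarrow> depth (ancestor t i) = depth i - t"
  using ancestor_less_depth by blast

lemma ancestor_depth: "i < n \<Longrightarrow> ancestor (depth i) i = 0"
  using ancestor_less_depth[of i "depth i"] depth_eq_0_iff by auto

lemma ancestor_nonzero: "i < n \<Longrightarrow> t < depth i \<Longrightarrow> ancestor t i \<noteq> 0"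
  using depth_ancestor[of i t] by (metis depth_root diff_is_0_eq leD less_imp_le)

lemma ancestor_edge: "i < n \<Longrightarrow> t < depth i \<Longrightarrow> E (ancestor t i) (ancestor (Suc t) i)"
  using parent(1)[of "ancestor t i"] ancestor_less[of i t] ancestor_nonzero[of i t]
  by (auto simp: ancestor_Suc intro: edge_sym)

definition ancestors :: "nat \<Rightarrow> nat \<Rightarrow> nat list" where
  "ancestors k i = map (\<lambda>t. ancestor t i) [0..<k]"

lemma ancestors_less: "i < n \<Longrightarrow> k \<le> Suc (depth i) \<Longrightarrow> set (ancestors k i) \<subseteq> {..<n}"
  by (auto simp: ancestors_def intro: ancestor_less)

lemma distinct_ancestors: "i < n \<Longrightarrow> k \<le> Suc (depth i) \<Longrightarrow> distinct (ancestors k i)"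
  unfolding ancestors_def distinct_map
proof (intro conjI inj_onI)
  fix s t assume "s \<in> set [0..<k]" "t \<in> set [0..<k]" "ancestor s i = ancestor t i"
  moreover assume "i < n" "k \<le> Suc (depth i)"
  ultimately show "s = t" using depth_ancestor[of i s] depth_ancestor[of i t] by auto
qed simp

lemma successively_ancestors: "i < n \<Longrightarrow> k \<le> Suc (depth i) \<Longrightarrow> successively E (ancestors k i)"
  by (auto simp: ancestors_def successively_map_upt intro: ancestor_edge)

lemma ancestors_Suc: "ancestors (Suc k) i = ancestors k i @ [ancestor k i]"
  by (simp add: ancestors_def)

lemma successively_rev_ancestors:
  "i < n \<Longrightarrow> k \<le> Suc (depth i) \<Longrightarrow> successively E (rev (ancestors k i))"
  using successively_ancestors by (auto intro: successively_mono edge_sym)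

text \<open>The ancestor chains of two adjacent vertices a and b, followed up to their first common
  vertex and closed by the edge between a and b, form a cycle.\<close>

lemma cycle_of_meeting_ancestors:
  assumes ab: "E a b" and depth: "depth b = depth a + \<delta>"
    and j: "0 < j" "j \<le> depth a" and meet: "ancestor j a = ancestor (j + \<delta>) b"
    and before: "\<And>t. t < j \<Longrightarrow> ancestor t a \<noteq> ancestor (t + \<delta>) b"
  shows "graph_has_cycle n E"
proof -
  have a: "a < n" and b: "b < n" using edge_bounds ab by auto
  define vs where "vs = ancestors (Suc j) a @ rev (ancestors (j + \<delta>) b)"
  show ?thesis
  proof (rule graph_has_cycleI)
    show "3 \<le> length vs" using j by (simp add: vs_def ancestors_def)
    have "ancestor t a \<noteq> ancestor u b" if "t \<le> j" "u < j + \<delta>" for t u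
    proof
      assume "ancestor t a = ancestor u b"
      moreover have "depth (ancestor t a) = depth a - t" using depth_ancestor[OF a] that j by simp
      moreover have "depth (ancestor u b) = depth b - u"
        using depth_ancestor[OF b, of u] that j depth by simp
      ultimately have "u = t + \<delta>" using depth that j by simp
      then show False using before[of t] that \<open>ancestor t a = ancestor u b\<close> by auto
    qed
    then show "distinct vs"
      using distinct_ancestors[OF a, of "Suc j"] distinct_ancestors[OF b, of "j + \<delta>"] j depth
      by (fastforce simp: vs_def ancestors_def)
    show "set vs \<subseteq> {..<n}"
      using ancestors_less[OF a] ancestors_less[OF b] j depth by (auto simp: vs_def)
    obtain u where u: "j + \<delta> = Suc u" using j by (cases "j + \<delta>") auto
    have "E (ancestor (Suc u) b) (ancestor u b)"
      using ancestor_edge[OF b, of u] u j depth edge_sym by simp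
    moreover have "ancestors (j + \<delta>) b = ancestors u b @ [ancestor u b]"
      using u by (simp add: ancestors_Suc)
    ultimately show "successively E vs"
      using successively_ancestors[OF a, of "Suc j"] successively_rev_ancestors[OF b, of "j + \<delta>"]
        j depth meet u
      by (simp add: vs_def successively_append_iff ancestors_Suc)
    have "hd vs = a" by (simp add: vs_def ancestors_def upt_conv_Cons del: upt_Suc)
    moreover have "last vs = b" using u by (simp add: vs_def ancestors_def upt_conv_Cons)
    ultimately show "E (last vs) (hd vs)" using ab edge_sym by simp
  qed
qed

lemma edge_to_deeper_vertex:
  assumes ab: "E a b" and deeper: "depth a \<le> depth b"
  shows "b \<noteq> 0 \<and> a = parent b"
proof (rule ccontr)
  assume not_parent: "\<not> (b \<noteq> 0 \<and> a = parent b)"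
  have a: "a < n" and b: "b < n" and "a \<noteq> b" using edge_bounds ab by auto
  define \<delta> where "\<delta> = depth b - depth a"
  have \<delta>: "\<delta> \<le> 1" "depth b = depth a + \<delta>" using depth_edge[OF ab] deeper \<delta>_def by auto
  define meets where "meets j \<longleftrightarrow> ancestor j a = ancestor (j + \<delta>) b" for j
  have "meets (depth a)" using ancestor_depth[OF a] ancestor_depth[OF b] \<delta>(2)
    by (simp add: meets_def)
  define j where "j = (LEAST j. meets j)"
  have meet: "ancestor j a = ancestor (j + \<delta>) b"
    using LeastI[of meets, OF \<open>meets (depth a)\<close>] by (simp add: j_def meets_def)
  have "j \<le> depth a"
    unfolding j_def using \<open>meets (depth a)\<close> by (rule Least_le)
  have "j \<noteq> 0"
  proof
    assume "j = 0"
    then have a_anc: "a = ancestor \<delta> b" using meet by simp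
    consider (same_depth) "\<delta> = 0" | (one_deeper) "\<delta> = 1" using \<delta> by linarith
    then show False
    proof cases
      case same_depth
      then show False using a_anc \<open>a \<noteq> b\<close> by simp
    next
      case one_deeper
      then have "b \<noteq> 0" using \<delta>(2) by (metis add_is_0 depth_root one_neq_zero)
      then show False using not_parent a_anc one_deeper by (simp add: ancestor_Suc)
    qed
  qed
  moreover have "ancestor t a \<noteq> ancestor (t + \<delta>) b" if "t < j" for t
    using not_less_Least[of t meets] that by (simp add: j_def meets_def)
  ultimately have "graph_has_cycle n E"
    using cycle_of_meeting_ancestors[OF ab \<delta>(2)] \<open>j \<le> depth a\<close> meet by blast
  then show False using acyclic by simp
qed

lemma edge_parent: "E a b \<Longrightarrow> (a \<noteq> 0 \<and> b = parent a) \<or> (b \<noteq> 0 \<and> a = parent b)"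
  using edge_to_deeper_vertex edge_sym nat_le_linear by metis

definition root_path :: "nat \<Rightarrow> nat list" where
  "root_path i = rev (ancestors (depth i) i)"

lemma root_path_root [simp]: "root_path 0 = []"
  by (simp add: root_path_def ancestors_def)

lemma root_path_parent: "i < n \<Longrightarrow> i \<noteq> 0 \<Longrightarrow> root_path i = root_path (parent i) @ [i]"
  using parent(2)[of i, symmetric]
  by (simp add: root_path_def ancestors_def map_upt_Suc ancestor_Suc' del: upt_Suc)

end

lemma (in group) subgroup_nat_pow_closed: "subgroup H G \<Longrightarrow> x \<in> H \<Longrightarrow> x [^] (k::nat) \<in> H"
  by (induction k) (auto simp: subgroup.one_closed subgroup.m_closed)

lemma (in group) nat_pow_mod: "x \<in> carrier G \<Longrightarrow> x [^] (N::nat) = \<one> \<Longrightarrow> x [^] k = x [^] (k mod N)"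
  by (metis mult_div_mod_eq nat_pow_mult nat_pow_pow nat_pow_one l_one nat_pow_closed)

lemma (in group) iso_eq_if_eq_on_centerless_normal:
  assumes N: "N \<lhd> G"
    and centerless: "\<And>c. c \<in> N \<Longrightarrow> (\<And>z. z \<in> N \<Longrightarrow> c \<otimes> z = z \<otimes> c) \<Longrightarrow> c = \<one>"
    and \<phi>: "\<phi> \<in> hom G G" and \<psi>: "\<psi> \<in> hom G G" and \<psi>_onto: "N \<subseteq> \<psi> ` N"
    and agree: "\<And>x. x \<in> N \<Longrightarrow> \<phi> x = \<psi> x"
    and same_coset: "inv (\<psi> g) \<otimes> \<phi> g \<in> N"
    and g: "g \<in> carrier G"
  shows "\<phi> g = \<psi> g"
proof -
  interpret N: normal N G by (rule N)
  interpret \<phi>: group_hom G G \<phi> using \<phi> by unfold_locales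
  interpret \<psi>: group_hom G G \<psi> using \<psi> by unfold_locales
  let ?h = "inv (\<psi> g) \<otimes> \<phi> g"
  have closed: "\<phi> g \<in> carrier G" "\<psi> g \<in> carrier G" using g by auto
  have "?h \<otimes> z = z \<otimes> ?h" if z: "z \<in> N" for z
  proof -
    obtain x where x: "x \<in> N" "z = \<psi> x" using z \<psi>_onto by blast
    then have xz: "x \<in> carrier G" "z \<in> carrier G" using N.subset by auto
    have "g \<otimes> x \<otimes> inv g \<in> N" using x g by (simp add: N.inv_op_closed2)
    then have "\<phi> (g \<otimes> x \<otimes> inv g) = \<psi> (g \<otimes> x \<otimes> inv g)" by (rule agree)
    then have "\<phi> g \<otimes> z \<otimes> inv (\<phi> g) = \<psi> g \<otimes> z \<otimes> inv (\<psi> g)"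
      using g x xz agree by (simp add: \<phi>.hom_inv \<psi>.hom_inv)
    then have "inv (\<psi> g) \<otimes> (\<phi> g \<otimes> z \<otimes> inv (\<phi> g)) \<otimes> \<phi> g =
        inv (\<psi> g) \<otimes> (\<psi> g \<otimes> z \<otimes> inv (\<psi> g)) \<otimes> \<phi> g" by simp
    moreover have "?h \<otimes> z = inv (\<psi> g) \<otimes> (\<phi> g \<otimes> z \<otimes> inv (\<phi> g)) \<otimes> \<phi> g"
      using closed xz by (simp add: m_assoc)
    moreover have "inv (\<psi> g) \<otimes> (\<psi> g \<otimes> z \<otimes> inv (\<psi> g)) \<otimes> \<phi> g = z \<otimes> ?h"
      using closed xz by (simp add: m_assoc[symmetric])
    ultimately show ?thesis by simp
  qed
  then have "?h = \<one>" by (rule centerless[OF same_coset])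
  moreover have "\<phi> g = \<psi> g \<otimes> ?h" using closed by (simp add: m_assoc[symmetric])
  ultimately show ?thesis using closed by simp
qed

lemma (in group) inv_mult_mem_if_same_side:
  assumes H: "subgroup H G" and s: "s \<in> carrier G"
    and cover: "\<And>x. x \<in> carrier G \<Longrightarrow> x \<in> H \<or> s \<otimes> x \<in> H"
    and xy: "x \<in> carrier G" "y \<in> carrier G" "x \<in> H \<longleftrightarrow> y \<in> H"
  shows "inv x \<otimes> y \<in> H"
proof (cases "x \<in> H")
  case True
  then show ?thesis using xy H by (simp add: subgroup.m_closed subgroup.m_inv_closed)
next
  case False
  then have "s \<otimes> x \<in> H" "s \<otimes> y \<in> H" using cover xy by auto
  then have "inv (s \<otimes> x) \<otimes> (s \<otimes> y) \<in> H" using H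
    by (simp add: subgroup.m_closed subgroup.m_inv_closed)
  moreover have "inv s \<otimes> (s \<otimes> y) = y" using s xy by (simp add: m_assoc[symmetric])
  ultimately show ?thesis using s xy by (simp add: inv_mult_group m_assoc)
qed

lemma (in group) iso_image_derived:
  "\<phi> \<in> iso G G \<Longrightarrow> \<phi> ` derived G (carrier G) = derived G (carrier G)"
  using group_hom.derived_img[of G G \<phi> "carrier G"]
  by (auto simp: iso_def bij_betw_def group_hom_def group_hom_axioms_def is_group)

lemma (in group) iso_mem_derived_iff:
  assumes \<phi>: "\<phi> \<in> iso G G" and g: "g \<in> carrier G"
  shows "\<phi> g \<in> derived G (carrier G) \<longleftrightarrow> g \<in> derived G (carrier G)"
proof -
  have "inj_on \<phi> (carrier G)" using \<phi> by (simp add: iso_def bij_betw_def)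
  then have "\<phi> g \<in> \<phi> ` derived G (carrier G) \<longleftrightarrow> g \<in> derived G (carrier G)"
    using g derived_in_carrier[OF subset_refl] by (intro inj_on_image_mem_iff) auto
  then show ?thesis using iso_image_derived[OF \<phi>] by simp
qed

section \<open>Normal forms for Coxeter groups on trees\<close>

definition inv_word :: "word \<Rightarrow> word" where
  "inv_word u = rev (map inv_letter u)"

lemma length_inv_word [simp]: "length (inv_word u) = length u"
  by (simp add: inv_word_def)

lemma word_over_append [simp]: "word_over n (u @ v) \<longleftrightarrow> word_over n u \<and> word_over n v"
  by (auto simp: word_over_def)

lemma word_over_inv_word [simp]: "word_over n (inv_word u) \<longleftrightarrow> word_over n u"
  by (auto simp: word_over_def inv_word_def inv_letter_def)

lemma even_length_coxeter_relator: "r \<in> coxeter_relators n m \<Longrightarrow> even (length r)"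
  by (auto simp: coxeter_relators_def length_concat sum_list_replicate)

lemma pres_eq_even_length:
  assumes "\<And>r. r \<in> R \<Longrightarrow> even (length r)"
  shows "pres_eq n R u v \<Longrightarrow> even (length u) \<longleftrightarrow> even (length v)"
  by (induction rule: pres_eq.induct) (auto dest: assms)

lemma funpow_conj: "((f \<circ> g) ^^ k) (f x) = f (((g \<circ> f) ^^ k) x)"
  by (induction k) auto

locale coxeter_tree =
  fixes n :: nat and m :: "nat \<Rightarrow> nat \<Rightarrow> enat"
  assumes coxeter: "coxeter_matrix n m"
    and tree: "graph_is_tree n (cox_adj n m)"
    and positive_rank: "0 < n"

sublocale coxeter_tree \<subseteq> rooted_tree n "cox_adj n m"
proof
  show "cox_adj n m b a" if "cox_adj n m a b" for a b
    using that coxeter by (auto simp: coxeter_matrix_def cox_adj_def)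
qed (use tree positive_rank in \<open>auto simp: graph_is_tree_def cox_adj_def\<close>)

context coxeter_tree
begin

text \<open>For e = 0 and e \<ge> n the order is 1, so no reduced word contains such a letter.\<close>

definition edge_order :: "nat \<Rightarrow> nat" where
  "edge_order e = (if 0 < e \<and> e < n then the_enat (m (parent e) e) else 1)"

lemma edge_order: assumes "0 < e" "e < n"
  shows "m (parent e) e = enat (edge_order e)" and "2 \<le> edge_order e"
proof -
  have edge: "cox_adj n m (parent e) e" using parent assms by simp
  then obtain k where k: "m (parent e) e = enat k" unfolding cox_adj_def
    by (cases "m (parent e) e") auto
  have "m (parent e) e \<ge> 2" using coxeter edge unfolding coxeter_matrix_def cox_adj_def by blast
  then show "m (parent e) e = enat (edge_order e)" and "2 \<le> edge_order e"
    using assms k by (simp_all add: edge_order_def numeral_eq_enat)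
qed

lemma edge_order_pos: "0 < edge_order e"
  using edge_order(2)[of e] by (cases "0 < e \<and> e < n") (auto simp: edge_order_def)

end

sublocale coxeter_tree \<subseteq> cyclic_free_product edge_order
  by unfold_locales (rule edge_order_pos)

context coxeter_tree
begin

definition path_mult :: "nat \<Rightarrow> (nat \<times> nat) list \<Rightarrow> (nat \<times> nat) list" where
  "path_mult i q = lmult (gen_word (root_path i)) q"

definition path_mult_inv :: "nat \<Rightarrow> (nat \<times> nat) list \<Rightarrow> (nat \<times> nat) list" where
  "path_mult_inv i q = lmult (inv_gen_word (root_path i)) q"

lemma reduced_path_mult: "reduced q \<Longrightarrow> reduced (path_mult i q)"
  by (simp add: path_mult_def reduced_lmult)

lemma reduced_path_mult_inv: "reduced q \<Longrightarrow> reduced (path_mult_inv i q)"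
  by (simp add: path_mult_inv_def reduced_lmult)

lemma path_mult_inv_cancel: "reduced q \<Longrightarrow> path_mult_inv i (path_mult i q) = q"
  by (simp add: path_mult_def path_mult_inv_def lmult_inv_gen_word_cancel)

lemma path_mult_cancel: "reduced q \<Longrightarrow> path_mult i (path_mult_inv i q) = q"
  by (simp add: path_mult_def path_mult_inv_def lmult_gen_word_cancel)

lemma path_mult_root [simp]: "path_mult 0 q = q"
  by (simp add: path_mult_def gen_word_def)

lemma path_mult_parent:
  "i < n \<Longrightarrow> i \<noteq> 0 \<Longrightarrow> path_mult i q = path_mult (parent i) (lmult1 i 1 q)"
  by (simp add: path_mult_def root_path_parent gen_word_append lmult_append gen_word_def)

lemma path_mult_inv_parent:
  "i < n \<Longrightarrow> i \<noteq> 0 \<Longrightarrow> path_mult_inv i q = lmult1 i (edge_order i - 1) (path_mult_inv (parent i) q)"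
  by (simp add: path_mult_inv_def root_path_parent inv_gen_word_append lmult_append
      inv_gen_word_def)

text \<open>The pair (q, b) stands for w_0^b times the normal form q. Since w_0 w_i is the product of the
  x_e along the path from the root to i, left multiplication by w_i maps (q, False) to
  (path_mult i q, True) and (q, True) to (path_mult_inv i q, False).\<close>

definition gen_act :: "nat \<Rightarrow> (nat \<times> nat) list \<times> bool \<Rightarrow> (nat \<times> nat) list \<times> bool" where
  "gen_act i p = (if snd p then (path_mult_inv i (fst p), False) else (path_mult i (fst p), True))"

text \<open>An inverted letter (i, True) acts like (i, False), the generators being involutions.\<close>

definition word_act :: "word \<Rightarrow> (nat \<times> nat) list \<times> bool \<Rightarrow> (nat \<times> nat) list \<times> bool" where
  "word_act u p = foldr (\<lambda>l. gen_act (fst l)) u p"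

lemma reduced_gen_act: "reduced (fst p) \<Longrightarrow> reduced (fst (gen_act i p))"
  by (simp add: gen_act_def reduced_path_mult reduced_path_mult_inv)

lemma gen_act_gen_act: "reduced (fst p) \<Longrightarrow> gen_act i (gen_act i p) = p"
  by (cases p) (auto simp: gen_act_def reduced_path_mult reduced_path_mult_inv
      path_mult_inv_cancel path_mult_cancel)

lemma word_act_Nil [simp]: "word_act [] p = p"
  by (simp add: word_act_def)

lemma word_act_Cons [simp]: "word_act (l # u) p = gen_act (fst l) (word_act u p)"
  by (simp add: word_act_def)

lemma word_act_append: "word_act (u @ v) p = word_act u (word_act v p)"
  by (simp add: word_act_def)

lemma reduced_word_act: "reduced (fst p) \<Longrightarrow> reduced (fst (word_act u p))"
  by (induction u) (auto simp: reduced_gen_act)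

lemma gen_act_child_parent:
  assumes b: "b < n" "b \<noteq> 0" and q: "reduced q"
  shows "(gen_act (parent b) \<circ> gen_act b) (q, False) = (lmult1 b 1 q, False)"
    and "(gen_act (parent b) \<circ> gen_act b) (path_mult (parent b) q, True) =
           (path_mult (parent b) (lmult1 b (edge_order b - 1) q), True)"
  using assms by (simp_all add: gen_act_def path_mult_parent path_mult_inv_parent
      path_mult_inv_cancel reduced_lmult1)

lemma gen_act_child_parent_power:
  assumes b: "b < n" "b \<noteq> 0" and q: "reduced q"
  shows "((gen_act (parent b) \<circ> gen_act b) ^^ k) (q, False) = (lmult1 b k q, False)"
    and "((gen_act (parent b) \<circ> gen_act b) ^^ k) (path_mult (parent b) q, True) =
           (path_mult (parent b) (lmult1 b (k * (edge_order b - 1)) q), True)"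
proof -
  show "((gen_act (parent b) \<circ> gen_act b) ^^ k) (q, False) = (lmult1 b k q, False)"
  proof (induction k)
    case (Suc k)
    then show ?case
      using gen_act_child_parent(1)[OF b reduced_lmult1[OF q]] lmult1_add[OF q, of b 1 k] by simp
  qed (simp add: q lmult1_zero)
  show "((gen_act (parent b) \<circ> gen_act b) ^^ k) (path_mult (parent b) q, True) =
      (path_mult (parent b) (lmult1 b (k * (edge_order b - 1)) q), True)"
  proof (induction k)
    case (Suc k)
    then show ?case
      using gen_act_child_parent(2)[OF b reduced_lmult1[OF q]]
        lmult1_add[OF q, of b "edge_order b - 1" "k * (edge_order b - 1)"]
      by simp
  qed (simp add: q lmult1_zero)
qed

lemma gen_act_child_parent_order:
  assumes b: "b < n" "b \<noteq> 0" and p: "reduced (fst p)"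
  shows "((gen_act (parent b) \<circ> gen_act b) ^^ edge_order b) p = p"
proof -
  obtain q c where pc: "p = (q, c)" by (cases p)
  show ?thesis
  proof (cases c)
    case True
    have "reduced (path_mult_inv (parent b) q)" using p pc by (simp add: reduced_path_mult_inv)
    then show ?thesis
      using gen_act_child_parent_power(2)[OF b, of "path_mult_inv (parent b) q" "edge_order b"]
        p pc True
      by (simp add: path_mult_cancel lmult1_zero)
  next
    case False
    then show ?thesis
      using gen_act_child_parent_power(1)[OF b, of q "edge_order b"] p pc by (simp add: lmult1_zero)
  qed
qed

lemma word_act_power:
  "word_act (concat (replicate k [(a, False), (b, False)])) p = ((gen_act a \<circ> gen_act b) ^^ k) p"
  by (induction k) (auto simp: word_act_append)

lemma word_act_relator:
  assumes r: "r \<in> coxeter_relators n m" and p: "reduced (fst p)"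
  shows "word_act r p = p"
proof -
  obtain a b k where r: "r = concat (replicate k [(a, False), (b, False)])"
    and ab: "a < n" "b < n" "m a b = enat k"
    using r unfolding coxeter_relators_def by blast
  show ?thesis
  proof (cases "a = b")
    case True
    then have "k = 1" using coxeter ab by (simp add: coxeter_matrix_def one_enat_def)
    then show ?thesis using True r p by (simp add: word_act_power gen_act_gen_act)
  next
    case False
    then have "cox_adj n m a b" using ab by (simp add: cox_adj_def)
    then consider "b \<noteq> 0" "a = parent b" | "a \<noteq> 0" "b = parent a" using edge_parent by blast
    then show ?thesis
    proof cases
      case 1
      then have "edge_order b = k" using edge_order(1)[of b] ab by simp
      then show ?thesis
        using 1 r ab p gen_act_child_parent_order[of b p] by (simp add: word_act_power)
    next
      case 2
      then have "edge_order a = k"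
        using edge_order(1)[of a] ab coxeter by (simp add: coxeter_matrix_def)
      have "((gen_act a \<circ> gen_act b) ^^ k) p =
          ((gen_act a \<circ> gen_act b) ^^ k) (gen_act a (gen_act a p))"
        using p by (simp add: gen_act_gen_act)
      also have "\<dots> = gen_act a (((gen_act b \<circ> gen_act a) ^^ k) (gen_act a p))"
        by (rule funpow_conj)
      also have "\<dots> = p"
        using 2 ab p \<open>edge_order a = k\<close> gen_act_child_parent_order[of a "gen_act a p"]
        by (simp add: reduced_gen_act gen_act_gen_act)
      finally show ?thesis using r by (simp add: word_act_power)
    qed
  qed
qed

lemma word_act_pres_eq:
  "pres_eq n (coxeter_relators n m) u v \<Longrightarrow> reduced (fst p) \<Longrightarrow> word_act u p = word_act v p"
proof (induction arbitrary: p rule: pres_eq.induct)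
  case (cancel l u v)
  then show ?case
    using gen_act_gen_act reduced_word_act by (simp add: word_act_append inv_letter_def)
next
  case (relator r u v)
  then show ?case
    using word_act_relator reduced_word_act by (simp add: word_act_append)
qed auto

lemma word_act_inv_word:
  "reduced (fst p) \<Longrightarrow> word_act (inv_word u) (word_act u p) = p"
proof (induction u arbitrary: p)
  case (Cons l u)
  then show ?case
    using gen_act_gen_act reduced_word_act
    by (simp add: inv_word_def word_act_append inv_letter_def)
qed (simp add: inv_word_def)

lemma word_act_from_reduced:
  "reduced q \<Longrightarrow>
   word_act u (q, False) = (lmult (fst (word_act u ([], False))) q, snd (word_act u ([], False)))"
proof (induction u)
  case (Cons l u)
  obtain f b where fb: "word_act u ([], False) = (f, b)" by (cases "word_act u ([], False)")
  then show ?case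
    using Cons lmult_assoc[OF Cons.prems]
    by (simp add: gen_act_def path_mult_def path_mult_inv_def)
qed simp

end

locale coxeter_tree_group = coxeter_tree n m + W: group W
  for n m and W :: "('g, 'b) monoid_scheme" +
  fixes w :: "nat \<Rightarrow> 'g"
  assumes presentation: "has_presentation W n w (coxeter_relators n m)"
begin

abbreviation word_val :: "word \<Rightarrow> 'g" where
  "word_val \<equiv> eval_word W w"

lemma gen_closed: "i < n \<Longrightarrow> w i \<in> carrier W"
  using presentation unfolding has_presentation_def by blast

lemma word_val_closed: "word_over n u \<Longrightarrow> word_val u \<in> carrier W"
  by (induction u) (auto simp: word_over_def gen_closed)

lemma word_val_append:
  "word_over n u \<Longrightarrow> word_over n v \<Longrightarrow> word_val (u @ v) = word_val u \<otimes>\<^bsub>W\<^esub> word_val v"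
  by (induction u) (auto simp: word_over_def gen_closed word_val_closed W.m_assoc)

lemma word_val_eq_one_iff: "word_over n u \<Longrightarrow> word_val u = \<one>\<^bsub>W\<^esub> \<longleftrightarrow> pres_eq n (coxeter_relators n m) u []"
  using presentation unfolding has_presentation_def by blast

lemma word_val_relator: "r \<in> coxeter_relators n m \<Longrightarrow> word_val r = \<one>\<^bsub>W\<^esub>"
proof -
  assume r: "r \<in> coxeter_relators n m"
  then have "word_over n r" by (auto simp: coxeter_relators_def word_over_def split: if_splits)
  moreover have "pres_eq n (coxeter_relators n m) r []"
    using pres_eq.relator[OF r, where u = "[]" and v = "[]"] pres_eq.sym by simp
  ultimately show ?thesis using word_val_eq_one_iff by blast
qed

lemma word_val_power:
  "a < n \<Longrightarrow> b < n \<Longrightarrow>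
   word_val (concat (replicate k [(a, False), (b, False)])) = (w a \<otimes>\<^bsub>W\<^esub> w b) [^]\<^bsub>W\<^esub> k"
proof (induction k)
  case (Suc k)
  have "(w a \<otimes>\<^bsub>W\<^esub> w b) [^]\<^bsub>W\<^esub> Suc k = w a \<otimes>\<^bsub>W\<^esub> w b \<otimes>\<^bsub>W\<^esub> (w a \<otimes>\<^bsub>W\<^esub> w b) [^]\<^bsub>W\<^esub> k"
    using Suc.prems gen_closed W.nat_pow_Suc2 by blast
  then show ?case
    using Suc gen_closed by (simp add: W.m_assoc)
qed simp

lemma gen_square: "i < n \<Longrightarrow> w i \<otimes>\<^bsub>W\<^esub> w i = \<one>\<^bsub>W\<^esub>"
proof -
  assume i: "i < n"
  then have "m i i = enat 1" using coxeter by (simp add: coxeter_matrix_def one_enat_def)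
  then have "concat (replicate 1 [(i, False), (i, False)]) \<in> coxeter_relators n m"
    unfolding coxeter_relators_def using i by blast
  then show ?thesis using word_val_relator gen_closed[OF i] by fastforce
qed

lemma gen_inv: "i < n \<Longrightarrow> inv\<^bsub>W\<^esub> (w i) = w i"
  using gen_square gen_closed W.inv_equality by blast

lemma word_val_surj: "x \<in> carrier W \<Longrightarrow> \<exists>u. word_over n u \<and> word_val u = x"
proof -
  assume "x \<in> carrier W"
  then have "x \<in> generate W (w ` {..<n})"
    using presentation unfolding has_presentation_def by blast
  then show ?thesis
  proof (induction rule: generate.induct)
    case one
    show ?case by (intro exI[of _ "[]"]) (simp add: word_over_def)
  next
    case (incl h)
    then obtain i where "i < n" "h = w i" by blast
    then show ?case using gen_closed by (intro exI[of _ "[(i, False)]"]) (auto simp: word_over_def)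
  next
    case (inv h)
    then obtain i where "i < n" "h = w i" by blast
    then show ?case using gen_closed by (intro exI[of _ "[(i, True)]"]) (auto simp: word_over_def)
  next
    case (eng h1 h2)
    then obtain u1 u2 where "word_over n u1" "word_val u1 = h1" "word_over n u2" "word_val u2 = h2"
      by blast
    then show ?case using word_val_append by (intro exI[of _ "u1 @ u2"]) simp
  qed
qed

lemma word_val_inv_word: "word_over n u \<Longrightarrow> word_val (inv_word u) = inv\<^bsub>W\<^esub> (word_val u)"
proof (induction u)
  case (Cons l u)
  obtain i b where l: "l = (i, b)" by (cases l)
  then have i: "i < n" and u: "word_over n u" using Cons.prems by (auto simp: word_over_def)
  have "word_val (inv_word (l # u)) = inv\<^bsub>W\<^esub> (word_val u) \<otimes>\<^bsub>W\<^esub> w i"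
    using Cons.IH[OF u] word_val_append[of "inv_word u" "[(i, \<not> b)]"] u i gen_closed gen_inv
    by (simp add: inv_word_def inv_letter_def l word_over_def)
  then show ?case
    using l i u gen_closed gen_inv word_val_closed by (simp add: W.inv_mult_group)
qed (simp add: inv_word_def)

lemma pres_eq_if_word_val_eq:
  assumes "word_over n u" "word_over n v" "word_val u = word_val v"
  shows "pres_eq n (coxeter_relators n m) (u @ inv_word v) []"
proof -
  have "word_val (u @ inv_word v) = word_val u \<otimes>\<^bsub>W\<^esub> inv\<^bsub>W\<^esub> (word_val v)"
    using assms by (simp add: word_val_append word_val_inv_word)
  also have "\<dots> = \<one>\<^bsub>W\<^esub>" using assms word_val_closed by simp
  finally show ?thesis using assms word_val_eq_one_iff by simp
qed

lemma word_act_word_val: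
  assumes "word_over n u" "word_over n v" "word_val u = word_val v" and p: "reduced (fst p)"
  shows "word_act u p = word_act v p"
proof -
  have "word_act (u @ inv_word v) (word_act v p) = word_act [] (word_act v p)"
    using word_act_pres_eq[OF pres_eq_if_word_val_eq[OF assms(1-3)]] reduced_word_act[OF p] .
  then show ?thesis using word_act_inv_word[OF p] by (simp add: word_act_append)
qed

lemma word_val_eq_even_length:
  assumes "word_over n u" "word_over n v" "word_val u = word_val v"
  shows "even (length u) \<longleftrightarrow> even (length v)"
  using pres_eq_even_length[OF even_length_coxeter_relator pres_eq_if_word_val_eq[OF assms]] by simp

definition edge_elem :: "nat \<Rightarrow> 'g" where
  "edge_elem e = w (parent e) \<otimes>\<^bsub>W\<^esub> w e"

definition nf_val :: "(nat \<times> nat) list \<Rightarrow> 'g" where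
  "nf_val q = foldr (\<lambda>(e, k) x. edge_elem e [^]\<^bsub>W\<^esub> k \<otimes>\<^bsub>W\<^esub> x) q \<one>\<^bsub>W\<^esub>"

definition state_val :: "(nat \<times> nat) list \<times> bool \<Rightarrow> 'g" where
  "state_val p = (if snd p then w 0 \<otimes>\<^bsub>W\<^esub> nf_val (fst p) else nf_val (fst p))"

lemma nf_val_Nil [simp]: "nf_val [] = \<one>\<^bsub>W\<^esub>"
  by (simp add: nf_val_def)

lemma nf_val_Cons [simp]: "nf_val ((e, k) # q) = edge_elem e [^]\<^bsub>W\<^esub> k \<otimes>\<^bsub>W\<^esub> nf_val q"
  by (simp add: nf_val_def)

lemma root_gen_closed: "w 0 \<in> carrier W"
  using gen_closed positive_rank by blast

lemma edge_elem_closed: "0 < e \<Longrightarrow> e < n \<Longrightarrow> edge_elem e \<in> carrier W"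
  by (simp add: edge_elem_def gen_closed parent_less)

lemma edge_elem_order: assumes "0 < e" "e < n" shows "edge_elem e [^]\<^bsub>W\<^esub> edge_order e = \<one>\<^bsub>W\<^esub>"
proof -
  have "concat (replicate (edge_order e) [(parent e, False), (e, False)]) \<in> coxeter_relators n m"
    unfolding coxeter_relators_def using edge_order(1)[OF assms] parent_less assms by blast
  then show ?thesis
    using word_val_relator word_val_power[of "parent e" e] parent_less assms
    by (fastforce simp: edge_elem_def)
qed

lemma edge_elem_pow_mod:
  "0 < e \<Longrightarrow> e < n \<Longrightarrow> edge_elem e [^]\<^bsub>W\<^esub> k = edge_elem e [^]\<^bsub>W\<^esub> (k mod edge_order e)"
  using W.nat_pow_mod edge_elem_closed edge_elem_order by blast

lemma reduced_vertex: "reduced q \<Longrightarrow> (e, k) \<in> set q \<Longrightarrow> 0 < e \<and> e < n"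
  by (cases "0 < e \<and> e < n") (auto simp: reduced_def edge_order_def)

lemma nf_val_closed: "reduced q \<Longrightarrow> nf_val q \<in> carrier W"
proof (induction q)
  case (Cons a q)
  obtain e k where "a = (e, k)" by (cases a)
  then show ?case
    using Cons reduced_vertex[of "a # q" e k] edge_elem_closed reduced_ConsD by auto
qed simp

lemma nf_val_lmult1:
  assumes e: "0 < e" "e < n" and q: "reduced q"
  shows "nf_val (lmult1 e k q) = edge_elem e [^]\<^bsub>W\<^esub> k \<otimes>\<^bsub>W\<^esub> nf_val q"
proof -
  have cons_power: "nf_val (cons_power e j r) = edge_elem e [^]\<^bsub>W\<^esub> j \<otimes>\<^bsub>W\<^esub> nf_val r"
    if "reduced r" for j r
    using that edge_elem_pow_mod[OF e, of j] nf_val_closed by (simp add: cons_power_def)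
  show ?thesis
  proof (cases "q \<noteq> [] \<and> fst (hd q) = e")
    case True
    then obtain x r where qr: "q = (e, x) # r" by (cases q) auto
    then have "reduced r" using q reduced_ConsD by blast
    then show ?thesis
      using qr cons_power edge_elem_closed[OF e] nf_val_closed
      by (simp add: W.m_assoc[symmetric] W.nat_pow_mult)
  next
    case False
    then show ?thesis using q cons_power by (simp add: lmult1_other)
  qed
qed

lemma nf_val_path_mult:
  "i < n \<Longrightarrow> reduced q \<Longrightarrow> nf_val (path_mult i q) = w 0 \<otimes>\<^bsub>W\<^esub> w i \<otimes>\<^bsub>W\<^esub> nf_val q"
proof (induction "depth i" arbitrary: i q)
  case 0
  then have "i = 0" using depth_eq_0_iff by simp
  then show ?case using 0 gen_square root_gen_closed nf_val_closed positive_rank by simp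
next
  case (Suc d)
  then have i: "i \<noteq> 0" by (metis depth_root nat.distinct(1))
  have p: "parent i < n" "d = depth (parent i)"
    using parent(2)[of i] parent_less[of i] Suc.prems(1) Suc.hyps(2) i by auto
  have "nf_val (path_mult i q) = w 0 \<otimes>\<^bsub>W\<^esub> w (parent i) \<otimes>\<^bsub>W\<^esub> (edge_elem i \<otimes>\<^bsub>W\<^esub> nf_val q)"
    using Suc.hyps(1)[OF p(2) p(1) reduced_lmult1[OF Suc.prems(2)]] Suc.prems i edge_elem_closed
    by (simp add: path_mult_parent nf_val_lmult1)
  also have "\<dots> = w 0 \<otimes>\<^bsub>W\<^esub> (w (parent i) \<otimes>\<^bsub>W\<^esub> w (parent i)) \<otimes>\<^bsub>W\<^esub> w i \<otimes>\<^bsub>W\<^esub> nf_val q"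
    using p Suc.prems gen_closed root_gen_closed nf_val_closed
    by (simp add: edge_elem_def W.m_assoc)
  finally show ?case
    using p Suc.prems gen_square gen_closed root_gen_closed by simp
qed

lemma nf_val_path_mult_inv:
  assumes i: "i < n" and q: "reduced q"
  shows "nf_val (path_mult_inv i q) = w i \<otimes>\<^bsub>W\<^esub> w 0 \<otimes>\<^bsub>W\<^esub> nf_val q"
proof -
  let ?q = "path_mult_inv i q"
  have "nf_val q = w 0 \<otimes>\<^bsub>W\<^esub> w i \<otimes>\<^bsub>W\<^esub> nf_val ?q"
    using nf_val_path_mult[OF i reduced_path_mult_inv[OF q, of i]] path_mult_cancel[OF q, of i]
    by simp
  then have "w i \<otimes>\<^bsub>W\<^esub> w 0 \<otimes>\<^bsub>W\<^esub> nf_val q = (w i \<otimes>\<^bsub>W\<^esub> (w 0 \<otimes>\<^bsub>W\<^esub> w 0) \<otimes>\<^bsub>W\<^esub> w i) \<otimes>\<^bsub>W\<^esub> nf_val ?q"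
    using i q gen_closed root_gen_closed nf_val_closed reduced_path_mult_inv
    by (simp add: W.m_assoc)
  then show ?thesis
    using i gen_square[OF positive_rank] gen_square[OF i] gen_closed
      nf_val_closed[OF reduced_path_mult_inv[OF q, of i]]
    by simp
qed

lemma state_val_gen_act:
  assumes i: "i < n" and p: "reduced (fst p)"
  shows "state_val (gen_act i p) = w i \<otimes>\<^bsub>W\<^esub> state_val p"
proof -
  have "w 0 \<otimes>\<^bsub>W\<^esub> (w 0 \<otimes>\<^bsub>W\<^esub> w i \<otimes>\<^bsub>W\<^esub> nf_val (fst p)) = w i \<otimes>\<^bsub>W\<^esub> nf_val (fst p)"
    using gen_square[OF positive_rank] i p gen_closed root_gen_closed nf_val_closed
    by (simp add: W.m_assoc[symmetric])
  then show ?thesis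
    using i p gen_closed root_gen_closed nf_val_closed
    by (simp add: gen_act_def state_val_def nf_val_path_mult nf_val_path_mult_inv W.m_assoc)
qed

lemma state_val_word_act: "word_over n u \<Longrightarrow> state_val (word_act u ([], False)) = word_val u"
proof (induction u)
  case (Cons l u)
  obtain i b where l: "l = (i, b)" by (cases l)
  then have "i < n" "word_over n u" using Cons.prems by (auto simp: word_over_def)
  then show ?case
    using Cons.IH state_val_gen_act reduced_word_act[of "([], False)"] l gen_inv by simp
qed (simp add: state_val_def)

abbreviation W' :: "'g set" where
  "W' \<equiv> derived W (carrier W)"

lemma derived_subgroup: "subgroup W' W"
  by (simp add: W.derived_is_subgroup)

definition even_elems :: "'g set" where
  "even_elems = {x \<in> carrier W. \<exists>u. word_over n u \<and> word_val u = x \<and> even (length u)}"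

lemma subgroup_even_elems: "subgroup even_elems W"
proof (rule W.subgroupI)
  show "even_elems \<subseteq> carrier W" by (auto simp: even_elems_def)
  show "even_elems \<noteq> {}"
    by (auto simp: even_elems_def word_over_def intro!: exI[of _ "[]"])
  show "inv\<^bsub>W\<^esub> x \<in> even_elems" if x: "x \<in> even_elems" for x
  proof -
    obtain u where "word_over n u" "word_val u = x" "even (length u)"
      using x unfolding even_elems_def by blast
    then show ?thesis
      using word_val_inv_word word_val_closed
      by (auto simp: even_elems_def intro!: exI[of _ "inv_word u"])
  qed
  show "x \<otimes>\<^bsub>W\<^esub> y \<in> even_elems" if xy: "x \<in> even_elems" "y \<in> even_elems" for x y
  proof -
    obtain u v where "word_over n u" "word_val u = x" "even (length u)"
      and "word_over n v" "word_val v = y" "even (length v)"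
      using xy unfolding even_elems_def by blast
    then show ?thesis
      using word_val_append word_val_closed
      by (auto simp: even_elems_def intro!: exI[of _ "u @ v"])
  qed
qed

lemma derived_subset_even_elems: "W' \<subseteq> even_elems"
  unfolding derived_def
proof (rule W.generate_subgroup_incl[OF _ subgroup_even_elems], rule subsetI)
  fix z assume "z \<in> derived_set W (carrier W)"
  then obtain x y where xy: "x \<in> carrier W" "y \<in> carrier W"
    and z: "z = x \<otimes>\<^bsub>W\<^esub> y \<otimes>\<^bsub>W\<^esub> inv\<^bsub>W\<^esub> x \<otimes>\<^bsub>W\<^esub> inv\<^bsub>W\<^esub> y" by blast
  obtain u v where u: "word_over n u" "word_val u = x" and v: "word_over n v" "word_val v = y"
    using word_val_surj xy by meson
  let ?t = "u @ v @ inv_word u @ inv_word v"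
  have "word_val ?t = z"
    using u v xy z by (simp add: word_val_append word_val_inv_word W.m_assoc)
  then show "z \<in> even_elems"
    using u v xy unfolding even_elems_def by (auto intro!: exI[of _ ?t] simp: z)
qed

lemma root_gen_not_in_derived: "w 0 \<notin> W'"
proof
  assume "w 0 \<in> W'"
  then obtain u where "word_over n u" "word_val u = word_val [(0, False)]" "even (length u)"
    using derived_subset_even_elems root_gen_closed by (auto simp: even_elems_def)
  then show False
    using word_val_eq_even_length[of u "[(0, False)]"] positive_rank by (simp add: word_over_def)
qed

context
  assumes odd: "odd_coxeter n m"
begin

text \<open>x_e^2 is the commutator of w_{p(e)} and w_e, and x_e is a power of x_e^2 because its order
  is odd.\<close>

lemma edge_elem_in_derived: assumes e: "0 < e" "e < n" shows "edge_elem e \<in> W'"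
proof -
  let ?x = "edge_elem e"
  have p: "parent e < n" "parent e \<noteq> e" using parent_less parent(1) edge_bounds e by auto
  have "odd (edge_order e)" using odd p e edge_order(1)[OF e] unfolding odd_coxeter_def by fastforce
  then obtain j where j: "Suc (edge_order e) = 2 * j" by (metis dvd_def even_Suc)
  have closed: "w (parent e) \<in> carrier W" "w e \<in> carrier W" "?x \<in> carrier W"
    using gen_closed edge_elem_closed p e by auto
  have "w (parent e) \<otimes>\<^bsub>W\<^esub> w e \<otimes>\<^bsub>W\<^esub> inv\<^bsub>W\<^esub> (w (parent e)) \<otimes>\<^bsub>W\<^esub> inv\<^bsub>W\<^esub> (w e) \<in> W'"
    unfolding derived_def using closed by (blast intro: generate.incl)
  then have "?x [^]\<^bsub>W\<^esub> (2::nat) \<in> W'"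
    using closed gen_inv p e by (simp add: edge_elem_def W.m_assoc numeral_2_eq_2)
  then have "(?x [^]\<^bsub>W\<^esub> (2::nat)) [^]\<^bsub>W\<^esub> j \<in> W'"
    by (rule W.subgroup_nat_pow_closed[OF derived_subgroup])
  moreover have "(?x [^]\<^bsub>W\<^esub> (2::nat)) [^]\<^bsub>W\<^esub> j = ?x"
    using edge_elem_order[OF e] closed j by (simp add: W.nat_pow_pow flip: j)
  ultimately show ?thesis by simp
qed

lemma nf_val_in_derived: "reduced q \<Longrightarrow> nf_val q \<in> W'"
proof (induction q)
  case (Cons a q)
  obtain e k where a: "a = (e, k)" by (cases a)
  then have "edge_elem e [^]\<^bsub>W\<^esub> k \<in> W'"
    using Cons.prems reduced_vertex[of "a # q" e k] edge_elem_in_derived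
      W.subgroup_nat_pow_closed[OF derived_subgroup]
    by auto
  then show ?case
    using Cons reduced_ConsD a subgroup.m_closed[OF derived_subgroup] by auto
qed (simp add: subgroup.one_closed[OF derived_subgroup])

lemma state_val_in_derived_iff: "reduced q \<Longrightarrow> state_val (q, b) \<in> W' \<longleftrightarrow> \<not> b"
proof
  assume q: "reduced q" and mem: "state_val (q, b) \<in> W'"
  show "\<not> b"
  proof
    assume b
    then have "w 0 \<otimes>\<^bsub>W\<^esub> nf_val q \<otimes>\<^bsub>W\<^esub> inv\<^bsub>W\<^esub> (nf_val q) \<in> W'"
      using mem q nf_val_in_derived derived_subgroup
      by (simp add: state_val_def subgroup.m_closed subgroup.m_inv_closed)
    then show False
      using root_gen_not_in_derived root_gen_closed nf_val_closed[OF q] by (simp add: W.m_assoc)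
  qed
qed (simp add: state_val_def nf_val_in_derived)

lemma derived_or_root_coset: "x \<in> carrier W \<Longrightarrow> x \<in> W' \<or> w 0 \<otimes>\<^bsub>W\<^esub> x \<in> W'"
proof -
  assume "x \<in> carrier W"
  then obtain u where u: "word_over n u" "word_val u = x" using word_val_surj by blast
  obtain q b where qb: "word_act u ([], False) = (q, b)" by (cases "word_act u ([], False)")
  then have q: "reduced q" using reduced_word_act[of "([], False)" u] by simp
  have x: "x = state_val (q, b)" using state_val_word_act[OF u(1)] u(2) qb by simp
  show ?thesis
  proof (cases b)
    case True
    then have "w 0 \<otimes>\<^bsub>W\<^esub> x = nf_val q"
      using x q gen_square[OF positive_rank] root_gen_closed nf_val_closed
      by (simp add: state_val_def W.m_assoc[symmetric])
    then show ?thesis using nf_val_in_derived q by simp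
  next
    case False
    then show ?thesis using x q state_val_in_derived_iff by simp
  qed
qed

lemma word_act_derived:
  assumes u: "word_over n u" "word_val u \<in> W'"
  shows "snd (word_act u ([], False)) = False"
proof -
  have "reduced (fst (word_act u ([], False)))" using reduced_word_act[of "([], False)" u] by simp
  then show ?thesis
    using u state_val_word_act[OF u(1)]
      state_val_in_derived_iff[of "fst (word_act u ([], False))" "snd (word_act u ([], False))"]
    by simp
qed

lemma derived_commuting_edge_elem_hd:
  assumes u: "word_over n u" "word_val u \<in> W'" and i: "0 < i" "i < n"
    and comm: "word_val u \<otimes>\<^bsub>W\<^esub> edge_elem i = edge_elem i \<otimes>\<^bsub>W\<^esub> word_val u"
  defines "q \<equiv> fst (word_act u ([], False))"
  shows "q = [] \<or> fst (hd q) = i"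
proof -
  let ?ui = "[(parent i, False), (i, False)]"
  have q: "reduced q" using reduced_word_act[of "([], False)" u] by (simp add: q_def)
  have nf: "word_act u ([], False) = (q, False)"
    using word_act_derived[OF u] by (simp add: q_def prod_eq_iff)
  have ui: "word_over n ?ui" "word_val ?ui = edge_elem i"
    using i parent_less gen_closed by (auto simp: word_over_def edge_elem_def)
  have "word_val (u @ ?ui) = word_val (?ui @ u)"
    by (simp only: word_val_append[OF u(1) ui(1)] word_val_append[OF ui(1) u(1)] ui(2) comm)
  then have "word_act (u @ ?ui) ([], False) = word_act (?ui @ u) ([], False)"
    using u(1) ui(1) word_over_append by (intro word_act_word_val) (blast, blast, blast, simp)
  moreover have "word_act ?ui ([], False) = ([(i, 1)], False)"
    using gen_act_child_parent(1)[of i "[]"] i edge_order(2)[OF i] by (simp add: cons_power_def)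
  moreover have "reduced [(i, 1)]" using edge_order(2)[OF i] by (simp add: reduced_Cons)
  ultimately have "lmult q [(i, 1)] = lmult1 i 1 q"
    using nf word_act_from_reduced[of "[(i, 1)]" u] gen_act_child_parent(1)[OF i(2) _ q] i
    by (simp add: word_act_append)
  then show ?thesis
    using reduced_commuting_generator_hd[OF q] edge_order(2)[OF i] by simp
qed

lemma derived_center_trivial:
  assumes n: "3 \<le> n" and c: "c \<in> W'" and central: "\<And>z. z \<in> W' \<Longrightarrow> c \<otimes>\<^bsub>W\<^esub> z = z \<otimes>\<^bsub>W\<^esub> c"
  shows "c = \<one>\<^bsub>W\<^esub>"
proof -
  obtain u where u: "word_over n u" "word_val u = c"
    using word_val_surj subgroup.mem_carrier[OF derived_subgroup c] by blast
  define q where "q = fst (word_act u ([], False))"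
  have "q = [] \<or> fst (hd q) = i" if "0 < i" "i < n" for i
    using derived_commuting_edge_elem_hd[of u i] u c central edge_elem_in_derived that
    by (simp add: q_def)
  then have "q = [] \<or> fst (hd q) = 1" "q = [] \<or> fst (hd q) = 2" using n by auto
  then have "q = []" by auto
  then have "word_act u ([], False) = ([], False)"
    using word_act_derived[OF u(1)] u c by (metis prod.collapse q_def)
  then show ?thesis
    using state_val_word_act[OF u(1)] u by (simp add: state_val_def)
qed

lemma iso_eq_if_eq_on_derived:
  assumes n: "3 \<le> n"
    and \<phi>: "\<phi> \<in> iso W W" and \<psi>: "\<psi> \<in> iso W W" and agree: "\<forall>x \<in> W'. \<phi> x = \<psi> x"
    and g: "g \<in> carrier W"
  shows "\<phi> g = \<psi> g"
proof (rule W.iso_eq_if_eq_on_centerless_normal[OF W.derived_self_is_normal _ _ _ _ _ _ g])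
  show "c = \<one>\<^bsub>W\<^esub>" if "c \<in> W'" "\<And>z. z \<in> W' \<Longrightarrow> c \<otimes>\<^bsub>W\<^esub> z = z \<otimes>\<^bsub>W\<^esub> c" for c
    using derived_center_trivial[OF n] that by blast
  show "\<phi> \<in> hom W W" "\<psi> \<in> hom W W" using \<phi> \<psi> by (simp_all add: iso_def)
  show "W' \<subseteq> \<psi> ` W'" using W.iso_image_derived[OF \<psi>] by simp
  show "\<phi> x = \<psi> x" if "x \<in> W'" for x using agree that by blast
  have "\<phi> g \<in> carrier W" "\<psi> g \<in> carrier W" using \<phi> \<psi> g by (auto simp: iso_def intro: hom_in_carrier)
  then show "inv\<^bsub>W\<^esub> (\<psi> g) \<otimes>\<^bsub>W\<^esub> \<phi> g \<in> W'"
    using W.inv_mult_mem_if_same_side[OF derived_subgroup root_gen_closed derived_or_root_coset]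
      W.iso_mem_derived_iff[OF \<phi> g] W.iso_mem_derived_iff[OF \<psi> g]
    by blast
qed

end

end

theorem proposition2p9:
  fixes W :: "('g, 'b) monoid_scheme" and n :: nat and w :: "nat \<Rightarrow> 'g"
    and m :: "nat \<Rightarrow> nat \<Rightarrow> enat"
  assumes "coxeter_system W n w m"
    and "odd_coxeter n m"
    and "n \<ge> 3"
    and "graph_connected n (cox_adj n m)"
    and "graph_is_tree n (cox_adj n m)"
  shows "\<forall>\<phi> \<in> iso W W. \<forall>\<psi> \<in> iso W W.
           (\<forall>x \<in> derived W (carrier W). \<phi> x = \<psi> x) \<longrightarrow>
           (\<forall>x \<in> carrier W. \<phi> x = \<psi> x)"
proof -
  have "coxeter_matrix n m" and pres: "has_presentation W n w (coxeter_relators n m)"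
    using assms(1) by (simp_all add: coxeter_system_def)
  \<comment> \<open>connectivity is already part of \<open>graph_is_tree\<close>\<close>
  then interpret coxeter_tree_group n m W w
    using assms(3,5) pres
    by (intro coxeter_tree_group.intro coxeter_tree.intro coxeter_tree_group_axioms.intro)
      (auto simp: has_presentation_def)
  show ?thesis using iso_eq_if_eq_on_derived[OF assms(2,3)] by blast
qed

end
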